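(* Let $\mathbb G=V_1\times V_2$ be a step-two Carnot group and $f\in\mathcal A_h(\mathbb G)$. Then $f$ is $\Sigma$-affine, i.e. for every $(x,z)\in\mathbb G$ and every $(x',z')\in\Sigma$, the map $t\in\mathbb R\mapsto f((x,z)\cdot(tx',tz'))$ is affine.
   Context: A step-two Carnot group is $\mathbb G=V_1\times V_2$, where $V_1,V_2$ are finite-dimensional real vector spaces with $V_2\neq\{0\}$, equipped with a bilinear skew-symmetric map $[\cdot,\cdot]:V_1\times V_1\to V_2$ with $\operatorname{span}\{[x,x']:x,x'\in V_1\}=V_2$, and group law $(x,z)\cdot(x',z')=(x+x',z+z'+[x,x'])$. $\mathcal A_h(\mathbb G)$ is the space of $h$-affine maps $f:\mathbb G\to\mathbb R$, i.e. such that for all $(x,z)\in\mathbb G$, $y\in V_1$, $t\mapsto f((x,z)\cdot(ty,0))$ is affine. For $x,y\in V_1$, $\operatorname{Lie}(x,y):=\operatorname{span}\{x,y\}\times\operatorname{span}\{[x,y]\}\subset\mathbb G$, and $\Sigma:=\bigcup_{x,y\in V_1}\operatorname{Lie}(x,y)$. *)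

theory Defs
  imports "HOL-Analysis.Analysis"
begin

text \<open>A step-two Carnot group: V1 = 'a, V2 = 'b (finite-dimensional real vector spaces,
  nontrivial since euclidean_space types have positive dimension), with bracket br.\<close>

definition step2_carnot :: "('a::euclidean_space \<Rightarrow> 'a \<Rightarrow> 'b::euclidean_space) \<Rightarrow> bool" where
  "step2_carnot br \<longleftrightarrow> bilinear br \<and> (\<forall>x y. br x y = - br y x)
     \<and> span {br x x' | x x'. True} = UNIV"

definition cmult :: "('a::real_vector \<Rightarrow> 'a \<Rightarrow> 'b::real_vector) \<Rightarrow> 'a \<times> 'b \<Rightarrow> 'a \<times> 'b \<Rightarrow> 'a \<times> 'b" where
  "cmult br p q = (fst p + fst q, snd p + snd q + br (fst p) (fst q))"

definition affine_fun :: "(real \<Rightarrow> real) \<Rightarrow> bool" where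
  "affine_fun g \<longleftrightarrow> (\<exists>a b. \<forall>t. g t = a + b * t)"

definition h_affine :: "('a::real_vector \<Rightarrow> 'a \<Rightarrow> 'b::real_vector) \<Rightarrow> ('a \<times> 'b \<Rightarrow> real) \<Rightarrow> bool" where
  "h_affine br f \<longleftrightarrow> (\<forall>p y. affine_fun (\<lambda>t. f (cmult br p (t *\<^sub>R y, 0))))"

definition LieSub :: "('a::real_vector \<Rightarrow> 'a \<Rightarrow> 'b::real_vector) \<Rightarrow> 'a \<Rightarrow> 'a \<Rightarrow> ('a \<times> 'b) set" where
  "LieSub br x y = span {x, y} \<times> span {br x y}"

definition Sigma_set :: "('a::real_vector \<Rightarrow> 'a \<Rightarrow> 'b::real_vector) \<Rightarrow> ('a \<times> 'b) set" where
  "Sigma_set br = (\<Union>x. \<Union>y. LieSub br x y)"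

end

theory Submission
  imports Defs
begin

text \<open>Pulling f back along a left translation composed with the homomorphism
  (s, u, v) \<mapsto> (s x + u y, v [x, y]) from the first Heisenberg group onto Lie(x, y)
  reduces the theorem to an h-affine function G on the Heisenberg group, for which
  t \<mapsto> G(t a, t b, t c) must be shown to be affine. A vertical segment is traced out by
  the midpoints of two horizontal lines, so G is affine in the vertical variable, with a
  slope that is affine along lines of the plane. Second differences of G(., ., 0) are
  governed by this slope; comparing the mixed differences obtained from different
  directions forces the slope to be constant in the direction (1, 0), hence, by
  rotation-dilation symmetry, constant everywhere.\<close>

lemma affine_fun_eq: "affine_fun g \<Longrightarrow> g t = g 0 + t * (g 1 - g 0)"
  unfolding affine_fun_def by auto

lemma affine_funI: "(\<And>t. g t = a + t * b) \<Longrightarrow> affine_fun g"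
  unfolding affine_fun_def by (metis mult.commute)

text \<open>h-affinity on the Heisenberg group \<real> \<times> \<real> \<times> \<real> with law
  (s, u, v) (a, b, c) = (s + a, u + b, v + c + s b - u a).\<close>

definition heis_affine :: "(real \<Rightarrow> real \<Rightarrow> real \<Rightarrow> real) \<Rightarrow> bool" where
  "heis_affine G \<longleftrightarrow>
     (\<forall>s u v a b. affine_fun (\<lambda>t. G (s + t * a) (u + t * b) (v + t * (s * b - u * a))))"

definition vertical_slope :: "(real \<Rightarrow> real \<Rightarrow> real \<Rightarrow> real) \<Rightarrow> real \<Rightarrow> real \<Rightarrow> real" where
  "vertical_slope G s u = G s u 1 - G s u 0"

lemma heis_affine_line:
  assumes "heis_affine G"
  shows "G (s + t * a) (u + t * b) (v + t * (s * b - u * a))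
           = G s u v + t * (G (s + a) (u + b) (v + (s * b - u * a)) - G s u v)"
  using affine_fun_eq[of _ t] assms unfolding heis_affine_def by fastforce

lemma heis_affine_midpoint:
  assumes "heis_affine G"
  shows "G (s + a) (u + b) (v + (s * b - u * a)) + G (s - a) (u - b) (v - (s * b - u * a))
           = 2 * G s u v"
  using heis_affine_line[OF assms, of s "-1" a u b v] by (simp add: algebra_simps)

text \<open>(s, u, w) is the midpoint of the points with parameter w on the horizontal lines
  through (s + 1, u, -u) and (s - 1, u, u) in the directions (0, 1) and (0, -1).\<close>

lemma heis_affine_vertical:
  assumes "heis_affine G"
  shows "G s u v = G s u 0 + v * vertical_slope G s u"
proof -
  let ?P = "G (s + 1) u (- u)" and ?P' = "G (s + 1) (u + 1) (1 - u + s)"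
  let ?M = "G (s - 1) u u" and ?M' = "G (s - 1) (u - 1) (1 + u - s)"
  have lin: "2 * G s u w = (?P + ?M) + w * (?P' - ?P + (?M' - ?M))" for w
    using heis_affine_midpoint[OF assms, of s 1 u w w]
      heis_affine_line[OF assms, of "s + 1" w 0 u 1 "- u"]
      heis_affine_line[OF assms, of "s - 1" w 0 u "- 1" u]
    by (simp add: algebra_simps)
  have "?P + ?M = 2 * G s u 0" "?P' - ?P + (?M' - ?M) = 2 * vertical_slope G s u"
    using lin[of 0] lin[of 1] unfolding vertical_slope_def by simp_all
  with lin[of v] show ?thesis by simp
qed

lemma heis_affine_vertical_slope_midpoint:
  assumes "heis_affine G"
  shows "vertical_slope G (s + a) (u + b) + vertical_slope G (s - a) (u - b)
           = 2 * vertical_slope G s u"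
proof -
  let ?c = "s * b - u * a"
  have "G (s + a) (u + b) (v + ?c) + G (s - a) (u - b) (v - ?c)
      = G (s + a) (u + b) 0 + G (s - a) (u - b) 0
        + ?c * (vertical_slope G (s + a) (u + b) - vertical_slope G (s - a) (u - b))
        + v * (vertical_slope G (s + a) (u + b) + vertical_slope G (s - a) (u - b))" for v
    using heis_affine_vertical[OF assms, of "s + a" "u + b" "v + ?c"]
      heis_affine_vertical[OF assms, of "s - a" "u - b" "v - ?c"]
    by (simp add: algebra_simps)
  from this[of 0] this[of 1] heis_affine_midpoint[OF assms, of s a u b 0]
    heis_affine_midpoint[OF assms, of s a u b 1] heis_affine_vertical[OF assms, of s u 1]
  show ?thesis by simp
qed

lemma heis_affine_second_difference:
  assumes "heis_affine G"
  shows "G (s + a) (u + b) 0 + G (s - a) (u - b) 0 - 2 * G s u 0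
           = (s * b - u * a) * (vertical_slope G (s - a) (u - b) - vertical_slope G (s + a) (u + b))"
  using heis_affine_midpoint[OF assms, of s a u b 0]
    heis_affine_vertical[OF assms, of "s + a" "u + b" "s * b - u * a"]
    heis_affine_vertical[OF assms, of "s - a" "u - b" "- (s * b - u * a)"]
  by (simp add: algebra_simps)

text \<open>Discrete integrability: with A = G(., ., 0), the mixed differences of A over the unit
  squares with lower left corners (1, 0), (0, 0), (0, -1), (-1, -1) are related both through
  second differences of A along (1, 0) and through those along (1, 1), (1, 0), (0, 1); each
  such second difference is a multiple of a slope difference.\<close>

lemma heis_affine_vertical_slope_curl:
  assumes "heis_affine G"
  shows "2 * vertical_slope G 2 1 + 2 * vertical_slope G 1 (-1)
           = vertical_slope G 0 1 + vertical_slope G (-1) (-1)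
             + vertical_slope G 0 (-1) + vertical_slope G 1 1"
  using heis_affine_second_difference[OF assms, of 1 1 1 0]
    heis_affine_second_difference[OF assms, of 1 1 0 0]
    heis_affine_second_difference[OF assms, of 0 1 0 0]
    heis_affine_second_difference[OF assms, of 0 1 "-1" 0]
    heis_affine_second_difference[OF assms, of 1 0 0 1]
    heis_affine_second_difference[OF assms, of 0 0 0 1]
    heis_affine_second_difference[OF assms, of 1 1 0 1]
    heis_affine_second_difference[OF assms, of 0 1 0 1]
  by simp

lemma heis_affine_vertical_slope_1_0:
  assumes "heis_affine G"
  shows "vertical_slope G 1 0 = vertical_slope G 0 0"
  using heis_affine_vertical_slope_curl[OF assms]
    heis_affine_vertical_slope_midpoint[OF assms, of 0 1 0 1]
    heis_affine_vertical_slope_midpoint[OF assms, of 0 1 0 "-1"]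
    heis_affine_vertical_slope_midpoint[OF assms, of 0 0 0 1]
    heis_affine_vertical_slope_midpoint[OF assms, of 1 1 0 1]
    heis_affine_vertical_slope_midpoint[OF assms, of 0 1 1 0]
    heis_affine_vertical_slope_midpoint[OF assms, of 1 0 0 1]
  by simp

lemma heis_affine_linear_change:
  assumes "heis_affine G"
  shows "heis_affine (\<lambda>s u v. G (m11 * s + m12 * u) (m21 * s + m22 * u) ((m11 * m22 - m12 * m21) * v))"
  unfolding heis_affine_def
proof (intro allI)
  fix s u v a b :: real
  have "affine_fun (\<lambda>t. G ((m11 * s + m12 * u) + t * (m11 * a + m12 * b))
      ((m21 * s + m22 * u) + t * (m21 * a + m22 * b))
      ((m11 * m22 - m12 * m21) * v
        + t * ((m11 * s + m12 * u) * (m21 * a + m22 * b) - (m21 * s + m22 * u) * (m11 * a + m12 * b))))"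
    using assms unfolding heis_affine_def by blast
  then show "affine_fun (\<lambda>t. G (m11 * (s + t * a) + m12 * (u + t * b))
      (m21 * (s + t * a) + m22 * (u + t * b)) ((m11 * m22 - m12 * m21) * (v + t * (s * b - u * a))))"
    by (simp add: algebra_simps)
qed

lemma heis_affine_vertical_slope_const:
  assumes "heis_affine G"
  shows "vertical_slope G p q = vertical_slope G 0 0"
proof (cases "p = 0 \<and> q = 0")
  case False
  define d where "d = p * p + q * q"
  have "d \<noteq> 0"
    using False unfolding d_def by (simp add: sum_squares_eq_zero_iff)
  let ?G' = "\<lambda>s u v. G (p * s + (- q) * u) (q * s + p * u) ((p * p - (- q) * q) * v)"
  have "vertical_slope ?G' 1 0 = vertical_slope ?G' 0 0"
    using heis_affine_vertical_slope_1_0 heis_affine_linear_change assms by blast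
  then have "d * vertical_slope G p q = d * vertical_slope G 0 0"
    using heis_affine_vertical[OF assms, of p q d] heis_affine_vertical[OF assms, of 0 0 d]
    unfolding vertical_slope_def d_def by simp
  with \<open>d \<noteq> 0\<close> show ?thesis by simp
qed simp

lemma heis_affine_radial:
  assumes "heis_affine G"
  shows "affine_fun (\<lambda>t. G (t * a) (t * b) (t * c))"
proof (rule affine_funI)
  fix t
  have "G (t * a) (t * b) (t * c) = G (t * a) (t * b) 0 + t * c * vertical_slope G (t * a) (t * b)"
    by (rule heis_affine_vertical[OF assms])
  also have "G (t * a) (t * b) 0 = G 0 0 0 + t * (G a b 0 - G 0 0 0)"
    using heis_affine_line[OF assms, of 0 t a 0 b 0] by simp
  also have "vertical_slope G (t * a) (t * b) = vertical_slope G 0 0"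
    by (rule heis_affine_vertical_slope_const[OF assms])
  finally show "G (t * a) (t * b) (t * c) = G 0 0 0 + t * (G a b 0 - G 0 0 0 + c * vertical_slope G 0 0)"
    by (simp add: algebra_simps)
qed

lemma step2_carnot_bracket_self:
  assumes "step2_carnot br"
  shows "br x x = 0"
proof -
  have "br x x = - br x x"
    using assms unfolding step2_carnot_def by blast
  then show ?thesis
    by (simp add: eq_neg_iff_add_eq_0 flip: scaleR_2)
qed

lemma cmult_assoc:
  assumes "bilinear br"
  shows "cmult br (cmult br p q) r = cmult br p (cmult br q r)"
  unfolding cmult_def
  by (simp add: bilinear_ladd[OF assms] bilinear_radd[OF assms] ac_simps)

lemma cmult_Lie:
  assumes "step2_carnot br"
  shows "cmult br (s *\<^sub>R x + u *\<^sub>R y, v *\<^sub>R br x y) (a *\<^sub>R x + b *\<^sub>R y, c *\<^sub>R br x y)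
           = ((s + a) *\<^sub>R x + (u + b) *\<^sub>R y, (v + c + (s * b - u * a)) *\<^sub>R br x y)"
proof -
  have bl: "bilinear br" and skew: "br y x = - br x y"
    using assms unfolding step2_carnot_def by blast+
  have "br (s *\<^sub>R x + u *\<^sub>R y) (a *\<^sub>R x + b *\<^sub>R y) = (s * b - u * a) *\<^sub>R br x y"
    by (simp add: bilinear_ladd[OF bl] bilinear_radd[OF bl] bilinear_lmul[OF bl] bilinear_rmul[OF bl]
        step2_carnot_bracket_self[OF assms] skew algebra_simps)
  then show ?thesis
    unfolding cmult_def by (simp add: algebra_simps)
qed

lemma heis_affine_Lie_restriction:
  assumes carnot: "step2_carnot br" and "h_affine br f"
  shows "heis_affine (\<lambda>s u v. f (cmult br p (s *\<^sub>R x + u *\<^sub>R y, v *\<^sub>R br x y)))"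
  unfolding heis_affine_def
proof (intro allI)
  fix s u v a b :: real
  have bl: "bilinear br"
    using carnot unfolding step2_carnot_def by blast
  have "affine_fun (\<lambda>t. f (cmult br (cmult br p (s *\<^sub>R x + u *\<^sub>R y, v *\<^sub>R br x y))
      (t *\<^sub>R (a *\<^sub>R x + b *\<^sub>R y), 0)))"
    using assms(2) unfolding h_affine_def by blast
  moreover have "cmult br (cmult br p (s *\<^sub>R x + u *\<^sub>R y, v *\<^sub>R br x y))
      (t *\<^sub>R (a *\<^sub>R x + b *\<^sub>R y), 0)
    = cmult br p ((s + t * a) *\<^sub>R x + (u + t * b) *\<^sub>R y, (v + t * (s * b - u * a)) *\<^sub>R br x y)"
    for t
  proof -
    have "(t *\<^sub>R (a *\<^sub>R x + b *\<^sub>R y), 0) = ((t * a) *\<^sub>R x + (t * b) *\<^sub>R y, 0 *\<^sub>R br x y)"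
      by (simp add: scaleR_add_right)
    then show ?thesis
      by (simp only: cmult_assoc[OF bl] cmult_Lie[OF carnot]) (simp add: algebra_simps)
  qed
  ultimately show "affine_fun (\<lambda>t. f (cmult br p ((s + t * a) *\<^sub>R x + (u + t * b) *\<^sub>R y,
      (v + t * (s * b - u * a)) *\<^sub>R br x y)))"
    by simp
qed

lemma span_pairE:
  assumes "z \<in> span {x, y}"
  obtains a b where "z = a *\<^sub>R x + b *\<^sub>R y"
proof -
  from assms obtain a where "z - a *\<^sub>R x \<in> span {y}"
    unfolding span_insert by blast
  then obtain b where "z - a *\<^sub>R x = b *\<^sub>R y"
    unfolding span_singleton by blast
  then show ?thesis
    using that[of a b] by (simp add: algebra_simps)
qed

theorem proposition3p7:
  fixes br :: "'a::euclidean_space \<Rightarrow> 'a \<Rightarrow> 'b::euclidean_space"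
    and f :: "'a \<times> 'b \<Rightarrow> real"
  assumes "step2_carnot br"
    and "h_affine br f"
  shows "\<forall>p. \<forall>q \<in> Sigma_set br. affine_fun (\<lambda>t. f (cmult br p (t *\<^sub>R fst q, t *\<^sub>R snd q)))"
proof (intro allI ballI)
  fix p q
  assume "q \<in> Sigma_set br"
  then obtain x y where "fst q \<in> span {x, y}" and "snd q \<in> span {br x y}"
    unfolding Sigma_set_def LieSub_def by (auto simp: mem_Times_iff)
  then obtain a b c where q: "fst q = a *\<^sub>R x + b *\<^sub>R y" "snd q = c *\<^sub>R br x y"
    by (metis span_pairE span_singleton rangeE)
  have "affine_fun (\<lambda>t. f (cmult br p ((t * a) *\<^sub>R x + (t * b) *\<^sub>R y, (t * c) *\<^sub>R br x y)))"
    using heis_affine_radial[OF heis_affine_Lie_restriction[OF assms]] .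
  then show "affine_fun (\<lambda>t. f (cmult br p (t *\<^sub>R fst q, t *\<^sub>R snd q)))"
    unfolding q by (simp add: algebra_simps)
qed

end
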